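(* Let $I=(T,((U_1,S_1),\dots,(U_k,S_k)))$ be an instance of \textsc{Generalized Graphic Inverse Voronoi in Trees} in which $U_1,\dots,U_k$ are pairwise disjoint subsets of $V(T)$, each inducing a connected subtree of $T$. Let $n=|V(T)|$, let $0<\delta<\mathrm{res}'(I)/(6n)$ and $\delta'=\delta/(4n)$, and let $I'=(T',((U_1',S_1'),\dots,(U_k',S_k')))$ be the instance constructed below. Then the answer to $I$ is ``yes'' if and only if the answer to $I'$ is ``yes''.
   Context: \textsc{Generalized Graphic Inverse Voronoi in Trees}: input is a tree $T$ with positive edge-lengths $\lambda$ and pairs $(U_i,S_i)$, $i\in[k]$, of subsets of $V(T)$ with $U_1,\dots,U_k$ covering $V(T)$; the answer is ``yes'' if there are $s_1,\dots,s_k$ with $s_i\in S_i$ and $U_i=\mathrm{cell}_T(s_i,\{s_1,\dots,s_k\})$ for all $i$, where $\mathrm{cell}_T(s,\Sigma)=\{x\mid d_T(s,x)\le d_T(s',x)\ \forall s'\in\Sigma\}$ and $d_T$ is shortest-path distance. Define $\mathrm{res}'(I)=\min\bigl(\mathbb{R}_{>0}\cap\{d_T(v,u)-d_T(v',u)\mid v,v',u\in V(T)\}\bigr)$. Construction of $T'$ with lengths $\lambda'$: for each edge $uv$ of $T$ create two vertices $a_{u,v},a_{v,u}$ joined by an edge, of length $\lambda(uv)$ if $u,v$ lie in the same $U_i$ and of length $\lambda(uv)-\delta$ otherwise; for each vertex $u$ of $T$, connect the vertices $\{a_{u,v}\mid uv\in E(T)\}$ by a path (in some order) whose edges have length $\delta'$.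 Set $U_i'=\{a_{u,v}\mid u\in U_i,\ uv\in E(T)\}$ and $S_i'=\{a_{u,v}\mid u\in S_i,\ uv\in E(T)\}$. *)

theory Defs
  imports Complex_Main
begin

definition graph_edges_ok :: "'a set \<Rightarrow> 'a set set \<Rightarrow> bool" where
  "graph_edges_ok V E \<longleftrightarrow> (\<forall>e\<in>E. \<exists>x y. x \<in> V \<and> y \<in> V \<and> x \<noteq> y \<and> e = {x, y})"

definition walk :: "'a set \<Rightarrow> 'a set set \<Rightarrow> 'a list \<Rightarrow> bool" where
  "walk V E p \<longleftrightarrow> p \<noteq> [] \<and> set p \<subseteq> V \<and>
     (\<forall>i. Suc i < length p \<longrightarrow> {p ! i, p ! Suc i} \<in> E)"

definition walk_len :: "('a set \<Rightarrow> real) \<Rightarrow> 'a list \<Rightarrow> real" where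
  "walk_len lam p = (\<Sum>i<length p - 1. lam {p ! i, p ! Suc i})"

definition dist_T :: "'a set \<Rightarrow> 'a set set \<Rightarrow> ('a set \<Rightarrow> real) \<Rightarrow> 'a \<Rightarrow> 'a \<Rightarrow> real" where
  "dist_T V E lam x y =
     Inf {walk_len lam p | p. walk V E p \<and> hd p = x \<and> last p = y}"

definition connected_graph :: "'a set \<Rightarrow> 'a set set \<Rightarrow> bool" where
  "connected_graph V E \<longleftrightarrow>
     (\<forall>x\<in>V. \<forall>y\<in>V. \<exists>p. walk V E p \<and> hd p = x \<and> last p = y)"

definition is_tree :: "'a set \<Rightarrow> 'a set set \<Rightarrow> bool" where
  "is_tree V E \<longleftrightarrow> finite V \<and> V \<noteq> {} \<and> graph_edges_ok V E \<and>
     connected_graph V E \<and> card E = card V - 1"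

definition induces_subtree :: "'a set \<Rightarrow> 'a set set \<Rightarrow> 'a set \<Rightarrow> bool" where
  "induces_subtree V E U \<longleftrightarrow> U \<noteq> {} \<and> U \<subseteq> V \<and> connected_graph U {e \<in> E. e \<subseteq> U}"

definition cell :: "'a set \<Rightarrow> 'a set set \<Rightarrow> ('a set \<Rightarrow> real) \<Rightarrow> 'a \<Rightarrow> 'a set \<Rightarrow> 'a set" where
  "cell V E lam s \<Sigma> = {x \<in> V. \<forall>s'\<in>\<Sigma>. dist_T V E lam s x \<le> dist_T V E lam s' x}"

text \<open>Answer "yes" to Generalized Graphic Inverse Voronoi (indices 0..k-1).\<close>
definition ggiv_yes :: "'a set \<Rightarrow> 'a set set \<Rightarrow> ('a set \<Rightarrow> real) \<Rightarrow> nat \<Rightarrow>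
    (nat \<Rightarrow> 'a set) \<Rightarrow> (nat \<Rightarrow> 'a set) \<Rightarrow> bool" where
  "ggiv_yes V E lam k U S \<longleftrightarrow>
     (\<exists>s. \<forall>i<k. s i \<in> S i \<and> U i = cell V E lam (s i) (s ` {..<k}))"

definition res' :: "'a set \<Rightarrow> 'a set set \<Rightarrow> ('a set \<Rightarrow> real) \<Rightarrow> real" where
  "res' V E lam = Min ({0<..} \<inter>
     {dist_T V E lam v u - dist_T V E lam v' u | v v' u. v \<in> V \<and> v' \<in> V \<and> u \<in> V})"

text \<open>ord u lists the neighbours of u, giving the order of the path at u.\<close>
definition valid_orders :: "'a set \<Rightarrow> 'a set set \<Rightarrow> ('a \<Rightarrow> 'a list) \<Rightarrow> bool" where
  "valid_orders V E ord \<longleftrightarrow>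
     (\<forall>u\<in>V. distinct (ord u) \<and> set (ord u) = {v. {u, v} \<in> E})"

text \<open>Vertex a_{u,v} is the pair (u,v).\<close>
definition V' :: "'a set set \<Rightarrow> ('a \<times> 'a) set" where
  "V' E = {(u, v). {u, v} \<in> E}"

definition cross_edges :: "'a set set \<Rightarrow> ('a \<times> 'a) set set" where
  "cross_edges E = {{(u, v), (v, u)} | u v. {u, v} \<in> E}"

definition path_edges :: "'a set \<Rightarrow> ('a \<Rightarrow> 'a list) \<Rightarrow> ('a \<times> 'a) set set" where
  "path_edges V ord = {{(u, ord u ! i), (u, ord u ! Suc i)} | u i. u \<in> V \<and> Suc i < length (ord u)}"

definition E' :: "'a set \<Rightarrow> 'a set set \<Rightarrow> ('a \<Rightarrow> 'a list) \<Rightarrow> ('a \<times> 'a) set set" where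
  "E' V E ord = cross_edges E \<union> path_edges V ord"

definition lam' :: "'a set set \<Rightarrow> ('a set \<Rightarrow> real) \<Rightarrow> nat \<Rightarrow> (nat \<Rightarrow> 'a set) \<Rightarrow> real \<Rightarrow> real \<Rightarrow>
    ('a \<times> 'a) set \<Rightarrow> real" where
  "lam' E lam k U \<delta> \<delta>' e =
     (if e \<in> cross_edges E then
        (if \<exists>i<k. fst ` e \<subseteq> U i then lam (fst ` e) else lam (fst ` e) - \<delta>)
      else \<delta>')"

definition U' :: "'a set set \<Rightarrow> 'a set \<Rightarrow> ('a \<times> 'a) set" where
  "U' E A = {(u, v). u \<in> A \<and> {u, v} \<in> E}"

end

theory Submission
  imports Defs
begin

text \<open>
  Let \<open>d\<close>, \<open>d'\<close> and \<open>d\<^sub>c\<close> be the distances in \<open>T\<close>, in \<open>T'\<close>, and in \<open>T\<close> with the edges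
  between different cells shortened by \<open>\<delta>\<close> (the lengths of the cross edges of \<open>T'\<close>).
  A potential argument gives \<open>d\<^sub>c(a, x) \<le> d'(a', x')\<close> for copies \<open>a'\<close>, \<open>x'\<close> of \<open>a\<close>, \<open>x\<close>:
  \<open>d\<^sub>c(a, -)\<close> changes by at most the length of a cross edge and not at all along the path
  at a vertex. Conversely, lifting a simple path of \<open>T\<close> to \<open>T'\<close> adds at most \<open>\<delta>'\<close> times
  the degree sum \<open>2(n - 1)\<close>, less than \<open>\<delta>/2\<close>, to its \<open>d\<^sub>c\<close>-length. Moreover
  \<open>d\<^sub>c \<ge> d - (n - 1)\<delta>\<close>, \<open>d\<^sub>c = d\<close> inside a cell (in a tree the path between two vertices
  of a subtree stays in it), and a path leaving the cell of its start is shortened by at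
  least \<open>\<delta>\<close>. Since distinct distance differences are at least \<open>res' > 6n\<delta>\<close>, a solution
  of \<open>I\<close> yields one of \<open>I'\<close> by choosing any copy of each site, and a solution of \<open>I'\<close>
  projects to one of \<open>I\<close>, each projected site being at least \<open>\<delta>/2\<close> closer to the
  vertices of its own cell than any other site.
\<close>

section \<open>Walks and shortest-path distances\<close>

lemma walk_len_Nil [simp]: "walk_len lam [] = 0"
  by (simp add: walk_len_def)

lemma walk_len_single [simp]: "walk_len lam [x] = 0"
  by (simp add: walk_len_def)

lemma walk_len_Cons2 [simp]: "walk_len lam (x # y # r) = lam {x, y} + walk_len lam (y # r)"
  by (simp add: walk_len_def sum.lessThan_Suc_shift del: sum.lessThan_Suc)

lemma walk_Nil [simp]: "\<not> walk V E []"
  by (simp add: walk_def)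

lemma walk_single [simp]: "walk V E [x] \<longleftrightarrow> x \<in> V"
  by (simp add: walk_def)

lemma walk_Cons2 [simp]: "walk V E (x # y # r) \<longleftrightarrow> x \<in> V \<and> {x, y} \<in> E \<and> walk V E (y # r)"
  by (auto simp: walk_def less_Suc_eq_0_disj)

lemma walk_append:
  "walk V E (xs @ a # r) \<longleftrightarrow> (xs = [] \<or> walk V E xs \<and> {last xs, a} \<in> E) \<and> walk V E (a # r)"
  by (induction xs rule: induct_list012) auto

lemma walk_len_append:
  "walk_len lam (xs @ a # r) = (if xs = [] then 0 else walk_len lam xs + lam {last xs, a}) + walk_len lam (a # r)"
  by (induction xs rule: induct_list012) auto

lemma walk_snoc:
  "walk V E (xs @ [a]) \<longleftrightarrow> (xs = [] \<or> walk V E xs \<and> {last xs, a} \<in> E) \<and> a \<in> V"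
  using walk_append[of V E xs a "[]"] by simp

lemma walk_len_snoc: "xs \<noteq> [] \<Longrightarrow> walk_len lam (xs @ [a]) = walk_len lam xs + lam {last xs, a}"
  using walk_len_append[of lam xs a "[]"] by simp

lemma walk_Cons: "walk V E (x # p) \<longleftrightarrow> x \<in> V \<and> (p = [] \<or> {x, hd p} \<in> E \<and> walk V E p)"
  by (cases p) auto

lemma walk_rev: "walk V E (rev p) \<longleftrightarrow> walk V E p"
proof -
  have "walk V E (rev p)" if "walk V E p" for p
    using that by (induction p) (auto simp: walk_Cons walk_snoc last_rev insert_commute)
  then show ?thesis by (metis rev_rev_ident)
qed

lemma walk_len_rev: "walk_len lam (rev p) = walk_len lam p"
proof (induction p)
  case (Cons x p)
  show ?case
  proof (cases "p = []")
    case False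
    then have "walk_len lam (rev (x # p)) = walk_len lam p + lam {hd p, x}"
      using walk_len_snoc[of "rev p" lam x] Cons.IH by (simp add: last_rev)
    then show ?thesis using False by (cases p) (auto simp: insert_commute)
  qed simp
qed simp

lemma walk_len_nonneg: "\<forall>e\<in>E. lam e \<ge> 0 \<Longrightarrow> walk V E p \<Longrightarrow> walk_len lam p \<ge> 0"
  by (induction p rule: induct_list012) auto

lemma walk_subset: "walk V E p \<Longrightarrow> set p \<subseteq> V"
  by (simp add: walk_def)

lemma walk_mono: "walk V E p \<Longrightarrow> V \<subseteq> V2 \<Longrightarrow> E \<subseteq> E2 \<Longrightarrow> walk V2 E2 p"
  unfolding walk_def by blast

lemma walk_len_ge_potential_diff:
  assumes "walk V E p" and "\<And>x y. {x, y} \<in> E \<Longrightarrow> \<phi> y - \<phi> x \<le> lam {x, y}"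
  shows "\<phi> (last p) - \<phi> (hd p) \<le> walk_len lam p"
  using assms(1)
proof (induction p rule: induct_list012)
  case (3 x y r)
  then show ?case using assms(2)[of x y] by auto
qed auto

lemma walk_shortcut:
  assumes "walk V E p" and nonneg: "\<forall>e\<in>E. lam e \<ge> 0"
  shows "\<exists>q. walk V E q \<and> distinct q \<and> hd q = hd p \<and> last q = last p \<and>
    walk_len lam q \<le> walk_len lam p"
  using assms(1)
proof (induction "length p" arbitrary: p rule: less_induct)
  case less
  show ?case
  proof (cases "distinct p")
    case False
    then obtain xs a ys zs where p: "p = xs @ a # ys @ a # zs"
      using not_distinct_decomp by fastforce
    define q where "q = xs @ a # zs"
    have "walk V E (xs @ a # (ys @ a # zs))" using less.prems p by simp
    then have pre: "xs = [] \<or> walk V E xs \<and> {last xs, a} \<in> E"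
      and "walk V E ((a # ys) @ a # zs)"
      by (simp_all only: walk_append append_Cons)
    then have loop: "walk V E (a # ys)" "{last (a # ys), a} \<in> E" "walk V E (a # zs)"
      by (simp_all only: walk_append) auto
    have "walk V E q"
      unfolding q_def walk_append using pre loop(3) by blast
    moreover have "walk_len lam q \<le> walk_len lam p"
    proof -
      have "walk_len lam ((a # ys) @ a # zs) \<ge> walk_len lam (a # zs)"
        using walk_len_nonneg[OF nonneg loop(1)] nonneg loop(2)
        by (simp only: walk_len_append) auto
      then show ?thesis
        unfolding p q_def walk_len_append[of lam xs] by simp
    qed
    moreover have "hd q = hd p" "last q = last p" "length q < length p"
      unfolding p q_def by (auto simp: hd_append)
    ultimately obtain r where "walk V E r" "distinct r" "hd r = hd p" "last r = last p"
      "walk_len lam r \<le> walk_len lam q"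
      using less.hyps[of q] by auto
    then show ?thesis
      using \<open>walk_len lam q \<le> walk_len lam p\<close> by (intro exI[of _ r]) auto
  qed (use less.prems in \<open>intro exI[of _ p], simp\<close>)
qed

lemma dist_T_le_walk_len:
  assumes "\<forall>e\<in>E. lam e \<ge> 0" "walk V E p"
  shows "dist_T V E lam (hd p) (last p) \<le> walk_len lam p"
  unfolding dist_T_def
proof (rule cInf_lower)
  show "bdd_below {walk_len lam q |q. walk V E q \<and> hd q = hd p \<and> last q = last p}"
    using walk_len_nonneg[OF assms(1)] by (auto intro!: bdd_belowI[of _ 0])
qed (use assms in auto)

lemma dist_T_greatest:
  assumes "\<exists>p. walk V E p \<and> hd p = x \<and> last p = y"
    and "\<And>p. walk V E p \<Longrightarrow> hd p = x \<Longrightarrow> last p = y \<Longrightarrow> c \<le> walk_len lam p"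
  shows "c \<le> dist_T V E lam x y"
  unfolding dist_T_def by (rule cInf_greatest) (use assms in auto)

lemma dist_T_attained:
  assumes "finite V" "connected_graph V E" and nonneg: "\<forall>e\<in>E. lam e \<ge> 0"
    and "x \<in> V" "y \<in> V"
  obtains q where "walk V E q" "distinct q" "hd q = x" "last q = y" "dist_T V E lam x y = walk_len lam q"
proof -
  define Q where "Q = {q. walk V E q \<and> distinct q \<and> hd q = x \<and> last q = y}"
  have "Q \<subseteq> {q. set q \<subseteq> V \<and> distinct q}"
    unfolding Q_def walk_def by auto
  then have fin: "finite (walk_len lam ` Q)"
    using finite_subset_distinct[OF assms(1)] by (metis finite_subset finite_imageI)
  obtain p where p: "walk V E p" "hd p = x" "last p = y"
    using assms unfolding connected_graph_def by blast
  then obtain q0 where "q0 \<in> Q"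
    using walk_shortcut[OF p(1) nonneg] unfolding Q_def by auto
  then have "Min (walk_len lam ` Q) \<in> walk_len lam ` Q"
    using Min_in[OF fin] by auto
  then obtain q where q: "q \<in> Q" "walk_len lam q = Min (walk_len lam ` Q)"
    by (metis imageE)
  have "walk_len lam q \<le> dist_T V E lam x y"
  proof (rule dist_T_greatest)
    fix p assume p: "walk V E p" "hd p = x" "last p = y"
    then obtain r where "r \<in> Q" "walk_len lam r \<le> walk_len lam p"
      using walk_shortcut[OF p(1) nonneg] unfolding Q_def by auto
    then show "walk_len lam q \<le> walk_len lam p"
      using q(2) Min_le[OF fin, of "walk_len lam r"] by auto
  qed (use p in blast)
  moreover have "dist_T V E lam x y \<le> walk_len lam q"
    using dist_T_le_walk_len[OF nonneg, of V q] q(1) unfolding Q_def by auto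
  ultimately show ?thesis
    using that q(1) unfolding Q_def by auto
qed

lemma dist_T_nonneg:
  assumes "finite V" "connected_graph V E" "\<forall>e\<in>E. lam e \<ge> 0" "x \<in> V" "y \<in> V"
  shows "dist_T V E lam x y \<ge> 0"
  by (metis dist_T_attained[OF assms] walk_len_nonneg[OF assms(3)])

lemma dist_T_self:
  assumes "\<forall>e\<in>E. lam e \<ge> 0" "x \<in> V"
  shows "dist_T V E lam x x = 0"
proof (rule antisym)
  show "dist_T V E lam x x \<le> 0"
    using dist_T_le_walk_len[OF assms(1), of V "[x]"] assms(2) by simp
  show "0 \<le> dist_T V E lam x x"
    by (rule dist_T_greatest) (use assms walk_len_nonneg in \<open>auto intro: exI[of _ "[x]"]\<close>)
qed

lemma dist_T_edge:
  assumes "finite V" "connected_graph V E" and nonneg: "\<forall>e\<in>E. lam e \<ge> 0"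
    and "a \<in> V" "u \<in> V" "v \<in> V" "{u, v} \<in> E"
  shows "dist_T V E lam a v \<le> dist_T V E lam a u + lam {u, v}"
proof -
  obtain q where q: "walk V E q" "hd q = a" "last q = u" "dist_T V E lam a u = walk_len lam q"
    using dist_T_attained[OF assms(1-5)] by metis
  moreover have "q \<noteq> []"
    using q(1) by auto
  ultimately have "walk V E (q @ [v])" "walk_len lam (q @ [v]) = walk_len lam q + lam {u, v}"
    using assms(6,7) by (auto simp: walk_snoc walk_len_snoc)
  then show ?thesis
    using dist_T_le_walk_len[OF nonneg, of V "q @ [v]"] q \<open>q \<noteq> []\<close> by simp
qed

section \<open>In a tree every edge is a bridge\<close>

lemma finite_edges: "finite V \<Longrightarrow> graph_edges_ok V E \<Longrightarrow> finite E"
  unfolding graph_edges_ok_def by (rule finite_subset[of _ "Pow V"]) auto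

lemma walk_avoiding_vertex: "walk V E p \<Longrightarrow> u \<notin> set p \<Longrightarrow> walk V {e \<in> E. u \<notin> e} p"
  by (induction p rule: induct_list012) auto

definition edge_rel :: "'a set set \<Rightarrow> ('a \<times> 'a) set" where
  "edge_rel F = {(x, y). {x, y} \<in> F}"

definition components :: "'a set \<Rightarrow> 'a set set \<Rightarrow> 'a set set" where
  "components V F = (\<lambda>x. (edge_rel F)\<^sup>* `` {x}) ` V"

lemma sym_edge_rel: "sym (edge_rel F)"
  unfolding edge_rel_def sym_def by (auto simp: insert_commute)

lemma edge_rel_class_eq: "(x, y) \<in> (edge_rel F)\<^sup>* \<Longrightarrow> (edge_rel F)\<^sup>* `` {x} = (edge_rel F)\<^sup>* `` {y}"
  using sym_rtrancl[OF sym_edge_rel, of F] by (auto dest: symD intro: rtrancl_trans)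

lemma walk_edge_rel: "walk V F p \<Longrightarrow> (hd p, last p) \<in> (edge_rel F)\<^sup>*"
proof (induction p rule: induct_list012)
  case (3 x y r)
  then show ?case
    by (auto simp: edge_rel_def intro: converse_rtrancl_into_rtrancl)
qed auto

lemma card_image_le_card_image:
  assumes "finite A" "\<And>x y. x \<in> A \<Longrightarrow> y \<in> A \<Longrightarrow> g x = g y \<Longrightarrow> f x = f y"
  shows "card (f ` A) \<le> card (g ` A)"
proof -
  have "f ` A = (\<lambda>x. f (inv_into A g (g x))) ` A"
  proof (rule image_cong)
    fix x assume "x \<in> A"
    then show "f x = f (inv_into A g (g x))"
      using assms(2)[OF _ inv_into_into[of "g x" g A]] f_inv_into_f[of "g x" g A] by simp
  qed simp
  also have "\<dots> = (f \<circ> inv_into A g) ` g ` A"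
    by (simp add: image_comp comp_def)
  finally show ?thesis
    using assms(1) by (metis card_image_le finite_imageI)
qed

lemma card_components_insert:
  assumes "finite V"
  shows "card (components V F) \<le> card (components V (insert {a, b} F)) + 1"
proof -
  define c where "c x = (edge_rel F)\<^sup>* `` {x}" for x
  define c' where "c' x = (edge_rel (insert {a, b} F))\<^sup>* `` {x}" for x
  \<comment> \<open>\<open>g\<close> merges the classes of \<open>a\<close> and \<open>b\<close>, so it is constant on the new classes.\<close>
  define g where "g x = (if c x = c b then c a else c x)" for x
  have g_eq: "g x = g y" if "(x, y) \<in> (edge_rel (insert {a, b} F))\<^sup>*" for x y
    using that
  proof (induction rule: rtrancl_induct)
    case (step y z)
    have "g y = g z"
    proof (cases "(y, z) \<in> edge_rel F")
      case True
      then show ?thesis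
        unfolding g_def c_def using edge_rel_class_eq[of y z F] by auto
    next
      case False
      then have "{y, z} = {a, b}"
        using step(2) by (auto simp: edge_rel_def)
      then show ?thesis
        unfolding g_def by (auto simp: doubleton_eq_iff)
    qed
    then show ?case
      using step.IH by simp
  qed simp
  have "card (c ` V) \<le> card (insert (c b) (g ` V))"
    by (rule card_mono) (use assms in \<open>auto simp: g_def\<close>)
  also have "\<dots> \<le> card (g ` V) + 1"
    using assms by (simp add: card_insert_if)
  also have "card (g ` V) \<le> card (c' ` V)"
  proof (rule card_image_le_card_image[OF assms])
    fix x y assume "c' x = c' y"
    then have "(x, y) \<in> (edge_rel (insert {a, b} F))\<^sup>*"
      unfolding c'_def by blast
    then show "g x = g y" by (rule g_eq)
  qed
  finally show ?thesis
    unfolding components_def c_def c'_def by simp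
qed

lemma card_le_card_edges_plus_components:
  assumes "finite V" "finite F" "graph_edges_ok V F"
  shows "card V \<le> card F + card (components V F)"
  using assms(2,3)
proof (induction F rule: finite_induct)
  case empty
  have "components V {} = (\<lambda>x. {x}) ` V"
    unfolding components_def edge_rel_def by simp
  then show ?case
    by (simp add: card_image)
next
  case (insert f F)
  then obtain a b where f: "f = {a, b}"
    unfolding graph_edges_ok_def by blast
  have "card V \<le> card F + card (components V F)"
    using insert unfolding graph_edges_ok_def by blast
  then show ?case
    using card_components_insert[OF assms(1), of F a b] insert(1,2) unfolding f by simp
qed

lemma tree_edge_is_bridge:
  assumes tree: "is_tree V E" and e: "{u, v} \<in> E"
  shows "(v, u) \<notin> (edge_rel (E - {{u, v}}))\<^sup>*"
  \<comment> \<open>Otherwise \<open>E - {{u, v}}\<close> would still connect \<open>V\<close>, with only \<open>card V - 2\<close> edges.\<close>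
proof
  define F where "F = E - {{u, v}}"
  have fin: "finite V" and ok: "graph_edges_ok V E" and cg: "connected_graph V E"
    and cardE: "card E = card V - 1"
    using tree unfolding is_tree_def by auto
  assume "(v, u) \<in> (edge_rel (E - {{u, v}}))\<^sup>*"
  then have vu: "(v, u) \<in> (edge_rel F)\<^sup>*"
    unfolding F_def .
  have uv: "(u, v) \<in> (edge_rel F)\<^sup>*"
    using symD[OF sym_rtrancl[OF sym_edge_rel] vu] .
  have "edge_rel E \<subseteq> (edge_rel F)\<^sup>*"
  proof clarify
    fix x y assume xy: "(x, y) \<in> edge_rel E"
    show "(x, y) \<in> (edge_rel F)\<^sup>*"
    proof (cases "{x, y} = {u, v}")
      case True
      then have "(x, y) = (u, v) \<or> (x, y) = (v, u)"
        by (auto simp: doubleton_eq_iff)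
      then show ?thesis
        using vu uv by auto
    next
      case False
      then have "(x, y) \<in> edge_rel F"
        using xy by (simp add: edge_rel_def F_def)
      then show ?thesis
        by (rule r_into_rtrancl)
    qed
  qed
  then have sub: "(edge_rel E)\<^sup>* \<subseteq> (edge_rel F)\<^sup>*"
    by (rule rtrancl_subset_rtrancl)
  have uV: "u \<in> V"
    using ok e unfolding graph_edges_ok_def by (auto simp: doubleton_eq_iff)
  have "components V F \<subseteq> {(edge_rel F)\<^sup>* `` {u}}"
  proof (clarsimp simp: components_def)
    fix z assume "z \<in> V"
    then obtain p where "walk V E p" "hd p = z" "last p = u"
      using cg uV unfolding connected_graph_def by blast
    then have "(z, u) \<in> (edge_rel F)\<^sup>*"
      using walk_edge_rel[of V E p] sub by auto
    then show "(edge_rel F)\<^sup>* `` {z} = (edge_rel F)\<^sup>* `` {u}"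
      by (rule edge_rel_class_eq)
  qed
  then have "card (components V F) \<le> 1"
    using card_mono[of "{(edge_rel F)\<^sup>* `` {u}}"] by simp
  moreover have finE: "finite E"
    using finite_edges[OF fin ok] .
  then have "card F = card E - 1"
    unfolding F_def using e by simp
  moreover have "graph_edges_ok V F"
    using ok unfolding F_def graph_edges_ok_def by blast
  then have "card V \<le> card F + card (components V F)"
    using card_le_card_edges_plus_components[OF fin] finE unfolding F_def by simp
  moreover have "card E > 0"
    using finE e by (auto simp: card_gt_0_iff)
  ultimately show False
    using cardE by linarith
qed

lemma distinct_walk_in_subtree:
  assumes tree: "is_tree V E" and W: "induces_subtree V E W"
    and q: "walk V E q" "distinct q" "hd q \<in> W" "last q \<in> W"
  shows "set q \<subseteq> W"
proof (rule ccontr)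
  \<comment> \<open>If \<open>uv\<close> is the first edge of \<open>q\<close> leaving \<open>W\<close>, the rest of \<open>q\<close> followed by a path
    inside \<open>W\<close> leads from \<open>v\<close> back to \<open>u\<close> without using \<open>uv\<close>.\<close>
  assume "\<not> set q \<subseteq> W"
  define xs where "xs = takeWhile (\<lambda>z. z \<in> W) q"
  have "dropWhile (\<lambda>z. z \<in> W) q \<noteq> []"
    using \<open>\<not> set q \<subseteq> W\<close> by (auto simp: dropWhile_eq_Nil_conv)
  then obtain v r where vr: "dropWhile (\<lambda>z. z \<in> W) q = v # r"
    by (cases "dropWhile (\<lambda>z. z \<in> W) q") auto
  have q_split: "q = xs @ v # r"
    using takeWhile_dropWhile_id[of "\<lambda>z. z \<in> W" q] unfolding xs_def vr by simp
  have "xs \<noteq> []"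
    using q(1,3) unfolding xs_def by (cases q) auto
  define u where "u = last xs"
  have "u \<in> set xs"
    using \<open>xs \<noteq> []\<close> unfolding u_def by simp
  then have uW: "u \<in> W"
    unfolding xs_def by (rule set_takeWhileD[THEN conjunct2])
  have vW: "v \<notin> W"
    using hd_dropWhile[of "\<lambda>z. z \<in> W" q] vr by simp
  have e: "{u, v} \<in> E" and rest: "walk V E (v # r)"
    using q(1) \<open>xs \<noteq> []\<close> unfolding q_split walk_append u_def by auto
  have "u \<notin> set (v # r)"
    using q(2) \<open>u \<in> set xs\<close> unfolding q_split by auto
  then have "walk V {e \<in> E. u \<notin> e} (v # r)"
    by (rule walk_avoiding_vertex[OF rest])
  then have "walk V (E - {{u, v}}) (v # r)"
    by (rule walk_mono) auto
  from walk_edge_rel[OF this] have "(v, last q) \<in> (edge_rel (E - {{u, v}}))\<^sup>*"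
    unfolding q_split by simp
  moreover obtain p where p: "walk W {e \<in> E. e \<subseteq> W} p" "hd p = last q" "last p = u"
    using W q(4) uW unfolding induces_subtree_def connected_graph_def by blast
  have "walk V (E - {{u, v}}) p"
    by (rule walk_mono[OF p(1)]) (use vW W in \<open>auto simp: induces_subtree_def\<close>)
  from walk_edge_rel[OF this] have "(last q, u) \<in> (edge_rel (E - {{u, v}}))\<^sup>*"
    using p by simp
  ultimately show False
    using tree_edge_is_bridge[OF tree e] rtrancl_trans by metis
qed

section \<open>Voronoi cells and the resolution\<close>

lemma cell_image:
  "cell V E lam (s i) (s ` {..<k}) = {x \<in> V. \<forall>j<k. dist_T V E lam (s i) x \<le> dist_T V E lam (s j) x}"
  unfolding cell_def by auto

lemma cover_piece_eq_minimizers: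
  fixes f :: "nat \<Rightarrow> 'b \<Rightarrow> real"
  assumes cover: "X = (\<Union>m<k. W m)"
    and strict: "\<And>x m j. m < k \<Longrightarrow> x \<in> W m \<Longrightarrow> j < k \<Longrightarrow> j \<noteq> m \<Longrightarrow> f m x < f j x"
    and "i < k"
  shows "W i = {x \<in> X. \<forall>j<k. f i x \<le> f j x}"
proof (intro equalityI subsetI)
  fix x assume x: "x \<in> W i"
  have "f i x \<le> f j x" if "j < k" for j
    using strict[OF \<open>i < k\<close> x that] by (cases "j = i") auto
  then show "x \<in> {x \<in> X. \<forall>j<k. f i x \<le> f j x}"
    using x cover \<open>i < k\<close> by auto
next
  fix x assume x: "x \<in> {x \<in> X. \<forall>j<k. f i x \<le> f j x}"
  then obtain m where m: "m < k" "x \<in> W m"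
    using cover by auto
  show "x \<in> W i"
  proof (rule ccontr)
    assume "x \<notin> W i"
    then have "f m x < f i x"
      using strict[OF m \<open>i < k\<close>] m by auto
    then show False
      using x m(1) by auto
  qed
qed

lemma res'_le_dist_diff:
  assumes "finite V" "a \<in> V" "b \<in> V" "x \<in> V"
    and less: "dist_T V E lam a x < dist_T V E lam b x"
  shows "res' V E lam \<le> dist_T V E lam b x - dist_T V E lam a x"
proof -
  define D where "D = {dist_T V E lam v u - dist_T V E lam v' u | v v' u. v \<in> V \<and> v' \<in> V \<and> u \<in> V}"
  have "D = (\<Union>v\<in>V. \<Union>v'\<in>V. \<Union>u\<in>V. {dist_T V E lam v u - dist_T V E lam v' u})"
    unfolding D_def by blast
  then have "finite D"
    using assms(1) by simp
  moreover have "dist_T V E lam b x - dist_T V E lam a x \<in> {0<..} \<inter> D"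
    using assms(2-4) less unfolding D_def by auto
  ultimately show ?thesis
    unfolding res'_def D_def[symmetric] by (intro Min_le) auto
qed

lemma res'_le_edge_length:
  assumes fin: "finite V" and cg: "connected_graph V E" and ok: "graph_edges_ok V E"
    and pos: "\<forall>e\<in>E. lam e > 0" and e: "e \<in> E"
  shows "res' V E lam \<le> lam e"
proof -
  have nonneg: "\<forall>e\<in>E. lam e \<ge> 0"
    using pos by auto
  obtain u v where uv: "u \<in> V" "v \<in> V" "u \<noteq> v" "e = {u, v}"
    using ok e unfolding graph_edges_ok_def by blast
  obtain q where q: "walk V E q" "hd q = u" "last q = v" "dist_T V E lam u v = walk_len lam q"
    using dist_T_attained[OF fin cg nonneg uv(1,2)] by metis
  then obtain w r where "q = u # w # r"
    using uv(3) by (cases q rule: remdups_adj.cases) auto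
  then have "dist_T V E lam u v > 0"
    using q pos walk_len_nonneg[OF nonneg, of V "w # r"] by fastforce
  moreover have "dist_T V E lam v v = 0"
    using dist_T_self[OF nonneg uv(2)] .
  ultimately have "res' V E lam \<le> dist_T V E lam u v - dist_T V E lam v v"
    using res'_le_dist_diff[OF fin uv(2,1,2), of E lam] by simp
  also have "\<dots> \<le> lam e"
    using dist_T_le_walk_len[OF nonneg, of V "[u, v]"] dist_T_self[OF nonneg uv(2)] uv e by simp
  finally show ?thesis .
qed

section \<open>The split tree\<close>

text \<open>The cross-edge lengths of \<open>T'\<close>, viewed as lengths on \<open>T\<close>.\<close>

definition lam_cut :: "('a set \<Rightarrow> real) \<Rightarrow> nat \<Rightarrow> (nat \<Rightarrow> 'a set) \<Rightarrow> real \<Rightarrow> 'a set \<Rightarrow> real" where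
  "lam_cut lam k U \<delta> e = (if \<exists>i<k. e \<subseteq> U i then lam e else lam e - \<delta>)"

lemma walk_len_lam_cut_le: "\<delta> \<ge> 0 \<Longrightarrow> walk_len (lam_cut lam k U \<delta>) q \<le> walk_len lam q"
  by (induction q rule: induct_list012) (auto simp: lam_cut_def add_mono)

lemma walk_len_lam_cut_ge:
  "\<delta> \<ge> 0 \<Longrightarrow> walk_len lam q - \<delta> * real (length q - 1) \<le> walk_len (lam_cut lam k U \<delta>) q"
  by (induction q rule: induct_list012) (auto simp: lam_cut_def algebra_simps)

lemma walk_len_lam_cut_inside:
  "m < k \<Longrightarrow> set q \<subseteq> U m \<Longrightarrow> walk_len (lam_cut lam k U \<delta>) q = walk_len lam q"
  by (induction q rule: induct_list012) (auto simp: lam_cut_def)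

lemma walk_len_lam_cut_leaving:
  assumes "\<delta> \<ge> 0" "j < k" and disj: "\<forall>i<k. \<forall>j<k. i \<noteq> j \<longrightarrow> U i \<inter> U j = {}"
  shows "q \<noteq> [] \<Longrightarrow> hd q \<in> U j \<Longrightarrow> last q \<notin> U j \<Longrightarrow>
    walk_len (lam_cut lam k U \<delta>) q \<le> walk_len lam q - \<delta>"
proof (induction q rule: induct_list012)
  case (3 x y r)
  show ?case
  proof (cases "y \<in> U j")
    case True
    then show ?thesis
      using 3 assms(1) by (auto simp: lam_cut_def)
  next
    case False
    have "\<not> {x, y} \<subseteq> U i" if "i < k" for i
    proof
      assume sub: "{x, y} \<subseteq> U i"
      then have "U i \<inter> U j = {}"
        using disj that \<open>j < k\<close> False by auto
      then show False
        using sub 3(4) by auto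
    qed
    then have "lam_cut lam k U \<delta> {x, y} = lam {x, y} - \<delta>"
      by (auto simp: lam_cut_def)
    then show ?thesis
      using walk_len_lam_cut_le[OF assms(1), of lam k U "y # r"] by simp
  qed
qed auto

locale split_tree =
  fixes V :: "'a set" and E :: "'a set set" and ord :: "'a \<Rightarrow> 'a list"
    and lam :: "'a set \<Rightarrow> real" and k :: nat and U :: "nat \<Rightarrow> 'a set" and \<delta> \<delta>' :: real
  assumes edges_ok: "graph_edges_ok V E" and orders: "valid_orders V E ord"
    and \<delta>'_nonneg: "\<delta>' \<ge> 0"
begin

lemma V'_iff: "(u, v) \<in> V' E \<longleftrightarrow> u \<in> V \<and> v \<in> set (ord u)"
proof -
  have "u \<in> V" if "{u, v} \<in> E"
    using edges_ok that unfolding graph_edges_ok_def by (auto simp: doubleton_eq_iff)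
  then show ?thesis
    using orders unfolding V'_def valid_orders_def by auto
qed

lemma V'_eq_Sigma: "V' E = (SIGMA u:V. set (ord u))"
  using V'_iff by auto

lemma cross_edge:
  assumes "{u, v} \<in> E"
  shows "{(u, v), (v, u)} \<in> E' V E ord" "lam' E lam k U \<delta> \<delta>' {(u, v), (v, u)} = lam_cut lam k U \<delta> {u, v}"
proof -
  have "{(u, v), (v, u)} \<in> cross_edges E"
    using assms unfolding cross_edges_def by blast
  moreover have "fst ` {(u, v), (v, u)} = {u, v}"
    by auto
  ultimately show "{(u, v), (v, u)} \<in> E' V E ord" "lam' E lam k U \<delta> \<delta>' {(u, v), (v, u)} = lam_cut lam k U \<delta> {u, v}"
    unfolding E'_def lam'_def lam_cut_def by auto
qed

lemma not_cross_edge: "{(u, a), (u, b)} \<notin> cross_edges E"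
proof
  assume "{(u, a), (u, b)} \<in> cross_edges E"
  then obtain x y where "{(u, a), (u, b)} = {(x, y), (y, x)}" "{x, y} \<in> E"
    unfolding cross_edges_def by blast
  moreover have "x \<noteq> y" if "{x, y} \<in> E" for x y
    using edges_ok that unfolding graph_edges_ok_def by (auto simp: doubleton_eq_iff)
  ultimately show False
    by (auto simp: doubleton_eq_iff)
qed

lemma path_edge:
  assumes "u \<in> V" "Suc t < length (ord u)"
  shows "{(u, ord u ! t), (u, ord u ! Suc t)} \<in> E' V E ord"
    "lam' E lam k U \<delta> \<delta>' {(u, ord u ! t), (u, ord u ! Suc t)} = \<delta>'"
proof -
  show "{(u, ord u ! t), (u, ord u ! Suc t)} \<in> E' V E ord"
    using assms unfolding E'_def path_edges_def by blast
  show "lam' E lam k U \<delta> \<delta>' {(u, ord u ! t), (u, ord u ! Suc t)} = \<delta>'"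
    by (simp add: lam'_def not_cross_edge)
qed

lemma walk_along_ord:
  assumes u: "u \<in> V" and "i \<le> j" "j < length (ord u)"
  defines "p \<equiv> map (\<lambda>t. (u, ord u ! t)) [i..<Suc j]"
  shows "walk (V' E) (E' V E ord) p" "hd p = (u, ord u ! i)" "last p = (u, ord u ! j)"
    "walk_len (lam' E lam k U \<delta> \<delta>') p = \<delta>' * real (j - i)"
proof -
  show "hd p = (u, ord u ! i)" "last p = (u, ord u ! j)"
    unfolding p_def using assms(2) by (simp_all add: hd_map last_map del: upt_Suc)
  have len: "length p = Suc j - i" and nth: "t < Suc j - i \<Longrightarrow> p ! t = (u, ord u ! (i + t))" for t
    unfolding p_def using assms(2) by (auto simp del: upt_Suc)
  have "set p \<subseteq> V' E"
    unfolding p_def using u assms(3) by (auto simp: V'_iff)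
  then show "walk (V' E) (E' V E ord) p"
    unfolding walk_def
  proof (intro conjI allI impI)
    fix t assume "Suc t < length p"
    then show "{p ! t, p ! Suc t} \<in> E' V E ord"
      using path_edge(1)[OF u, of "i + t"] assms(3) len nth[of t] nth[of "Suc t"] by simp
  qed (use len assms(2) in auto)
  have "walk_len (lam' E lam k U \<delta> \<delta>') p = (\<Sum>t<j - i. \<delta>')"
    unfolding walk_len_def len using path_edge(2)[OF u] assms(2,3) nth
    by (intro sum.cong) auto
  then show "walk_len (lam' E lam k U \<delta> \<delta>') p = \<delta>' * real (j - i)"
    by simp
qed

lemma walk_at_vertex:
  assumes u: "u \<in> V" and "v \<in> set (ord u)" "y \<in> set (ord u)"
  obtains p where "walk (V' E) (E' V E ord) p" "hd p = (u, v)" "last p = (u, y)"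
    "walk_len (lam' E lam k U \<delta> \<delta>') p \<le> \<delta>' * real (length (ord u))"
proof -
  obtain i j where ij: "i < length (ord u)" "ord u ! i = v" "j < length (ord u)" "ord u ! j = y"
    using assms(2,3) by (metis in_set_conv_nth)
  have le: "\<delta>' * real (j - i) \<le> \<delta>' * real (length (ord u))" "\<delta>' * real (i - j) \<le> \<delta>' * real (length (ord u))"
    using ij \<delta>'_nonneg by (simp_all add: mult_left_mono)
  show ?thesis
  proof (cases "i \<le> j")
    case True
    note p = walk_along_ord[OF u True ij(3)]
    show ?thesis
      by (rule that[OF p(1-3)[unfolded ij]]) (use p(4) le in simp)
  next
    case False
    then have "j \<le> i" by simp
    note p = walk_along_ord[OF u this ij(1)]
    show ?thesis
      by (rule that[OF walk_rev[THEN iffD2, OF p(1)]])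
        (use p(2-4) le ij in \<open>simp_all add: hd_rev last_rev walk_len_rev\<close>)
  qed
qed

lemma lift_walk:
  "walk V E q \<Longrightarrow> v \<in> set (ord (hd q)) \<Longrightarrow> y \<in> set (ord (last q)) \<Longrightarrow>
    \<exists>p. walk (V' E) (E' V E ord) p \<and> hd p = (hd q, v) \<and> last p = (last q, y) \<and>
      walk_len (lam' E lam k U \<delta> \<delta>') p
        \<le> walk_len (lam_cut lam k U \<delta>) q + \<delta>' * (\<Sum>u\<leftarrow>q. real (length (ord u)))"
proof (induction q arbitrary: v rule: induct_list012)
  case (2 x)
  obtain p where "walk (V' E) (E' V E ord) p" "hd p = (x, v)" "last p = (x, y)"
    "walk_len (lam' E lam k U \<delta> \<delta>') p \<le> \<delta>' * real (length (ord x))"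
    by (rule walk_at_vertex[of x v y]) (use 2 in auto)
  then show ?case
    by (intro exI[of _ p]) simp
next
  case (3 x w r)
  then have x: "x \<in> V" and xw: "{x, w} \<in> E" and wr: "walk V E (w # r)"
    by auto
  have "(x, w) \<in> V' E" "(w, x) \<in> V' E"
    using xw by (simp_all add: V'_def insert_commute)
  then have "w \<in> set (ord x)" "x \<in> set (ord w)"
    by (simp_all add: V'_iff)
  obtain p1 where p1: "walk (V' E) (E' V E ord) p1" "hd p1 = (x, v)" "last p1 = (x, w)"
    "walk_len (lam' E lam k U \<delta> \<delta>') p1 \<le> \<delta>' * real (length (ord x))"
    using walk_at_vertex[OF x] 3(4) \<open>w \<in> set (ord x)\<close> by (metis list.sel(1))
  obtain p2 where p2: "walk (V' E) (E' V E ord) p2" "hd p2 = (w, x)" "last p2 = (last (w # r), y)"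
    "walk_len (lam' E lam k U \<delta> \<delta>') p2
      \<le> walk_len (lam_cut lam k U \<delta>) (w # r) + \<delta>' * (\<Sum>u\<leftarrow>w # r. real (length (ord u)))"
    using 3(2)[OF wr] \<open>x \<in> set (ord w)\<close> 3(5) by auto
  have "p1 \<noteq> []" "p2 \<noteq> []"
    using p1(1) p2(1) by auto
  then obtain t where t: "p2 = (w, x) # t"
    using p2(2) by (cases p2) auto
  have "walk (V' E) (E' V E ord) (p1 @ (w, x) # t)"
    using p1 p2(1) cross_edge(1)[OF xw] \<open>p1 \<noteq> []\<close> unfolding t by (simp add: walk_append)
  moreover have "walk_len (lam' E lam k U \<delta> \<delta>') (p1 @ (w, x) # t)
      = walk_len (lam' E lam k U \<delta> \<delta>') p1 + lam_cut lam k U \<delta> {x, w} + walk_len (lam' E lam k U \<delta> \<delta>') p2"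
    using p1(3) cross_edge(2)[OF xw] \<open>p1 \<noteq> []\<close> unfolding t by (simp add: walk_len_append)
  ultimately show ?case
    using p1 p2 \<open>p1 \<noteq> []\<close> unfolding t
    by (intro exI[of _ "p1 @ (w, x) # t"]) (auto simp: algebra_simps)
qed simp

lemma walk_len_lam'_ge_potential_diff:
  assumes p: "walk (V' E) (E' V E ord) p"
    and \<phi>: "\<And>u w. {u, w} \<in> E \<Longrightarrow> \<phi> w - \<phi> u \<le> lam_cut lam k U \<delta> {u, w}"
  shows "\<phi> (fst (last p)) - \<phi> (fst (hd p)) \<le> walk_len (lam' E lam k U \<delta> \<delta>') p"
proof (rule walk_len_ge_potential_diff[OF p, of "\<phi> \<circ> fst", unfolded comp_def])
  fix a b assume ab: "{a, b} \<in> E' V E ord"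
  show "\<phi> (fst b) - \<phi> (fst a) \<le> lam' E lam k U \<delta> \<delta>' {a, b}"
  proof (cases "{a, b} \<in> cross_edges E")
    case True
    then obtain u w where uw: "{a, b} = {(u, w), (w, u)}" "{u, w} \<in> E"
      unfolding cross_edges_def by blast
    then have "(a, b) = ((u, w), (w, u)) \<or> (a, b) = ((w, u), (u, w))"
      by (auto simp: doubleton_eq_iff)
    then show ?thesis
      using \<phi>[OF uw(2)] \<phi>[of w u] uw cross_edge(2)[OF uw(2)]
      by (auto simp: insert_commute)
  next
    case False
    then obtain u i where "{a, b} = {(u, ord u ! i), (u, ord u ! Suc i)}"
      using ab unfolding E'_def path_edges_def by blast
    then have "fst a = fst b"
      by (auto simp: doubleton_eq_iff)
    then show ?thesis
      using False \<delta>'_nonneg by (simp add: lam'_def)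
  qed
qed

lemma card_V'_le:
  assumes "finite V"
  shows "card (V' E) \<le> 2 * card E"
proof -
  have "V' E = (\<Union>e\<in>E. {(x, y). {x, y} = e})"
    unfolding V'_def by auto
  then have "card (V' E) \<le> (\<Sum>e\<in>E. card {(x, y). {x, y} = e})"
    using card_UN_le[OF finite_edges[OF assms edges_ok]] by simp
  also have "\<dots> \<le> (\<Sum>e\<in>E. 2)"
  proof (rule sum_mono)
    fix e assume "e \<in> E"
    then obtain a b where "e = {a, b}"
      using edges_ok unfolding graph_edges_ok_def by blast
    then have "{(x, y). {x, y} = e} \<subseteq> {(a, b), (b, a)}"
      by (auto simp: doubleton_eq_iff)
    then have "card {(x, y). {x, y} = e} \<le> card {(a, b), (b, a)}"
      by (rule card_mono[rotated]) simp
    also have "\<dots> \<le> 2"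
      by (rule card_insert_le_m1) simp_all
    finally show "card {(x, y). {x, y} = e} \<le> 2" .
  qed
  finally show ?thesis
    by simp
qed

lemma sum_length_ord_le:
  assumes "finite V"
  shows "(\<Sum>u\<in>V. length (ord u)) \<le> 2 * card E"
proof -
  have "(\<Sum>u\<in>V. length (ord u)) = (\<Sum>u\<in>V. card (set (ord u)))"
  proof (intro sum.cong refl)
    fix u assume "u \<in> V"
    then have "distinct (ord u)"
      using orders unfolding valid_orders_def by blast
    then show "length (ord u) = card (set (ord u))"
      by (simp add: distinct_card)
  qed
  also have "\<dots> = card (V' E)"
    unfolding V'_eq_Sigma using assms by (simp add: card_SigmaI)
  finally show ?thesis
    using card_V'_le[OF assms] by simp
qed

end

section \<open>Distances in the tree and in the split tree\<close>

locale inverse_voronoi_reduction = split_tree +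
  assumes tree: "is_tree V E" and pos: "\<forall>e\<in>E. lam e > 0"
    and cover: "(\<Union>i<k. U i) = V"
    and disj: "\<forall>i<k. \<forall>j<k. i \<noteq> j \<longrightarrow> U i \<inter> U j = {}"
    and conn: "\<forall>i<k. induces_subtree V E (U i)"
    and n2: "2 \<le> card V" and \<delta>_pos: "0 < \<delta>"
    and \<delta>_small: "\<delta> < res' V E lam / (6 * real (card V))"
    and \<delta>'_def: "\<delta>' = \<delta> / (4 * real (card V))"
begin

abbreviation "d \<equiv> dist_T V E lam"
abbreviation "d_cut \<equiv> dist_T V E (lam_cut lam k U \<delta>)"
abbreviation "d' \<equiv> dist_T (V' E) (E' V E ord) (lam' E lam k U \<delta> \<delta>')"

lemma finite_V: "finite V" and connected: "connected_graph V E" and card_E: "card E = card V - 1"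
  using tree unfolding is_tree_def by auto

lemma lam_nonneg: "\<forall>e\<in>E. lam e \<ge> 0"
  using pos by auto

lemma six_n_\<delta>_less_res': "6 * real (card V) * \<delta> < res' V E lam"
proof -
  have "real (card V) > 0"
    using n2 by simp
  then show ?thesis
    using \<delta>_small by (simp add: pos_less_divide_eq algebra_simps)
qed

lemma lam_cut_pos: "e \<in> E \<Longrightarrow> lam_cut lam k U \<delta> e > 0"
proof -
  assume e: "e \<in> E"
  have "1 * \<delta> \<le> (6 * real (card V)) * \<delta>"
    using n2 \<delta>_pos by (intro mult_right_mono) auto
  then have "\<delta> < lam e"
    using six_n_\<delta>_less_res' res'_le_edge_length[OF finite_V connected edges_ok pos e] by simp
  then show ?thesis
    using pos e by (simp add: lam_cut_def)
qed

lemma lam_cut_nonneg: "\<forall>e\<in>E. lam_cut lam k U \<delta> e \<ge> 0"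
  using lam_cut_pos by (simp add: less_imp_le)

lemma lam'_nonneg: "\<forall>e\<in>E' V E ord. lam' E lam k U \<delta> \<delta>' e \<ge> 0"
proof
  fix e assume "e \<in> E' V E ord"
  show "lam' E lam k U \<delta> \<delta>' e \<ge> 0"
  proof (cases "e \<in> cross_edges E")
    case True
    then obtain u v where "e = {(u, v), (v, u)}" "{u, v} \<in> E"
      unfolding cross_edges_def by blast
    then show ?thesis
      using cross_edge(2) lam_cut_pos by (simp add: less_imp_le)
  next
    case False
    then show ?thesis
      using \<delta>'_nonneg by (simp add: lam'_def)
  qed
qed

lemma ord_nonempty:
  assumes x: "x \<in> V"
  shows "ord x \<noteq> []"
proof -
  obtain z where z: "z \<in> V" "z \<noteq> x"
  proof -
    have "\<not> V \<subseteq> {x}"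
      using n2 card_mono[of "{x}" V] by auto
    then show ?thesis
      using that by blast
  qed
  obtain p where p: "walk V E p" "hd p = x" "last p = z"
    using connected x z(1) unfolding connected_graph_def by blast
  then obtain w r where "p = x # w # r"
    using z(2) by (cases p rule: remdups_adj.cases) auto
  then have "(x, w) \<in> V' E"
    using p(1) by (simp add: V'_def)
  then show ?thesis
    by (auto simp: V'_iff)
qed

lemma lift_overhead_le:
  assumes "set q \<subseteq> V" "distinct q"
  shows "\<delta>' * (\<Sum>u\<leftarrow>q. real (length (ord u))) \<le> \<delta> / 2"
proof -
  have "(\<Sum>u\<leftarrow>q. real (length (ord u))) = (\<Sum>u\<in>set q. real (length (ord u)))"
    using assms(2) by (rule sum_list_distinct_conv_sum_set)
  also have "\<dots> \<le> (\<Sum>u\<in>V. real (length (ord u)))"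
    using assms(1) finite_V by (intro sum_mono2) auto
  also have "\<dots> \<le> 2 * (real (card V) - 1)"
    using sum_length_ord_le[OF finite_V] card_E n2 by (simp flip: of_nat_sum)
  finally have "\<delta>' * (\<Sum>u\<leftarrow>q. real (length (ord u))) \<le> \<delta>' * (2 * (real (card V) - 1))"
    using \<delta>'_nonneg by (rule mult_left_mono)
  also have "\<dots> \<le> \<delta> / 2"
    using n2 \<delta>_pos unfolding \<delta>'_def by (simp add: field_simps)
  finally show ?thesis .
qed

lemma dist'_le_lifted_walk:
  assumes q: "walk V E q" "distinct q" and "v \<in> set (ord (hd q))" "y \<in> set (ord (last q))"
  shows "d' (hd q, v) (last q, y) \<le> walk_len (lam_cut lam k U \<delta>) q + \<delta> / 2"
proof -
  obtain p where p: "walk (V' E) (E' V E ord) p" "hd p = (hd q, v)" "last p = (last q, y)"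
    "walk_len (lam' E lam k U \<delta> \<delta>') p
      \<le> walk_len (lam_cut lam k U \<delta>) q + \<delta>' * (\<Sum>u\<leftarrow>q. real (length (ord u)))"
    using lift_walk[OF q(1) assms(3,4)] by blast
  have "d' (hd q, v) (last q, y) \<le> walk_len (lam' E lam k U \<delta> \<delta>') p"
    using dist_T_le_walk_len[OF lam'_nonneg p(1)] p(2,3) by simp
  also have "\<dots> \<le> walk_len (lam_cut lam k U \<delta>) q + \<delta> / 2"
    using p(4) lift_overhead_le[OF walk_subset[OF q(1)] q(2)] by linarith
  finally show ?thesis .
qed

lemma connected_T': "connected_graph (V' E) (E' V E ord)"
  unfolding connected_graph_def
proof (intro ballI)
  fix a' x' assume "a' \<in> V' E" "x' \<in> V' E"
  moreover obtain a v x y where "a' = (a, v)" "x' = (x, y)"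
    by (cases a', cases x') auto
  ultimately have a: "a \<in> V" "v \<in> set (ord a)" and x: "x \<in> V" "y \<in> set (ord x)"
    by (auto simp: V'_iff)
  obtain q where "walk V E q" "hd q = a" "last q = x"
    using connected a(1) x(1) unfolding connected_graph_def by blast
  then show "\<exists>p. walk (V' E) (E' V E ord) p \<and> hd p = a' \<and> last p = x'"
    using lift_walk[of q v y] a x \<open>a' = (a, v)\<close> \<open>x' = (x, y)\<close> by blast
qed

lemma d_cut_le_d':
  assumes a': "a' \<in> V' E" and x': "x' \<in> V' E"
  shows "d_cut (fst a') (fst x') \<le> d' a' x'"
proof (rule dist_T_greatest)
  show "\<exists>p. walk (V' E) (E' V E ord) p \<and> hd p = a' \<and> last p = x'"
    using connected_T' a' x' unfolding connected_graph_def by blast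
next
  fix p assume p: "walk (V' E) (E' V E ord) p" "hd p = a'" "last p = x'"
  have a: "fst a' \<in> V"
    using a' by (cases a') (simp add: V'_iff)
  have "d_cut (fst a') w - d_cut (fst a') u \<le> lam_cut lam k U \<delta> {u, w}" if "{u, w} \<in> E" for u w
  proof -
    have "u \<in> V" "w \<in> V"
      using that edges_ok unfolding graph_edges_ok_def by (auto simp: doubleton_eq_iff)
    then show ?thesis
      using dist_T_edge[OF finite_V connected lam_cut_nonneg a _ _ that] by simp
  qed
  from walk_len_lam'_ge_potential_diff[OF p(1) this]
  show "d_cut (fst a') (fst x') \<le> walk_len (lam' E lam k U \<delta> \<delta>') p"
    using p(2,3) dist_T_self[OF lam_cut_nonneg a] by simp
qed

lemma d_cut_ge:
  assumes "a \<in> V" "x \<in> V"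
  shows "d a x - (real (card V) - 1) * \<delta> \<le> d_cut a x"
proof -
  obtain q where q: "walk V E q" "distinct q" "hd q = a" "last q = x" "d_cut a x = walk_len (lam_cut lam k U \<delta>) q"
    using dist_T_attained[OF finite_V connected lam_cut_nonneg assms] by metis
  have "length q \<le> card V"
    using distinct_card[OF q(2)] card_mono[OF finite_V walk_subset[OF q(1)]] by simp
  moreover have "q \<noteq> []"
    using q(1) by auto
  ultimately have "\<delta> * real (length q - 1) \<le> (real (card V) - 1) * \<delta>"
    using \<delta>_pos by (simp add: mult.commute Suc_le_eq)
  moreover have "d a x \<le> walk_len lam q"
    using dist_T_le_walk_len[OF lam_nonneg q(1)] q(3,4) by simp
  ultimately show ?thesis
    using walk_len_lam_cut_ge[of \<delta> lam q k U] \<delta>_pos q(5) by linarith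
qed

lemma d_le_d_cut_in_cell:
  assumes m: "m < k" and "a \<in> U m" "x \<in> U m"
  shows "d a x \<le> d_cut a x"
proof -
  have "a \<in> V" "x \<in> V"
    using assms cover by blast+
  then obtain q where q: "walk V E q" "distinct q" "hd q = a" "last q = x"
    "d_cut a x = walk_len (lam_cut lam k U \<delta>) q"
    using dist_T_attained[OF finite_V connected lam_cut_nonneg] by metis
  have "set q \<subseteq> U m"
    using distinct_walk_in_subtree[OF tree _ q(1,2)] conn m assms(2,3) q(3,4) by simp
  then have "d_cut a x = walk_len lam q"
    using q(5) walk_len_lam_cut_inside[OF m] by simp
  then show ?thesis
    using dist_T_le_walk_len[OF lam_nonneg q(1)] q(3,4) by simp
qed

lemma d'_le_d:
  assumes "a \<in> V" "x \<in> V" "v \<in> set (ord a)" "y \<in> set (ord x)"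
  shows "d' (a, v) (x, y) \<le> d a x + \<delta> / 2"
proof -
  obtain q where q: "walk V E q" "distinct q" "hd q = a" "last q = x" "d a x = walk_len lam q"
    using dist_T_attained[OF finite_V connected lam_nonneg assms(1,2)] by metis
  then show ?thesis
    using dist'_le_lifted_walk[OF q(1,2)] walk_len_lam_cut_le[of \<delta> lam k U q] \<delta>_pos assms(3,4)
    by fastforce
qed

lemma d'_le_d_leaving:
  assumes j: "j < k" and "a \<in> U j" "x \<in> V" "x \<notin> U j" "v \<in> set (ord a)" "y \<in> set (ord x)"
  shows "d' (a, v) (x, y) \<le> d a x - \<delta> / 2"
proof -
  have "a \<in> V"
    using assms(1,2) cover by auto
  then obtain q where q: "walk V E q" "distinct q" "hd q = a" "last q = x" "d a x = walk_len lam q"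
    using dist_T_attained[OF finite_V connected lam_nonneg _ assms(3)] by metis
  have "q \<noteq> []"
    using q(1) by auto
  then have "walk_len (lam_cut lam k U \<delta>) q \<le> walk_len lam q - \<delta>"
    using walk_len_lam_cut_leaving[of \<delta> j k U q lam] \<delta>_pos j disj q(3,4) assms(2,4) by auto
  then show ?thesis
    using dist'_le_lifted_walk[OF q(1,2)] q(3-5) assms(5,6) by fastforce
qed

lemma d'_self: "a' \<in> V' E \<Longrightarrow> d' a' a' = 0"
  by (rule dist_T_self[OF lam'_nonneg])

lemma d'_nonneg:
  assumes "a' \<in> V' E" "x' \<in> V' E"
  shows "0 \<le> d' a' x'"
proof -
  have "fst a' \<in> V" "fst x' \<in> V"
    using assms by (metis V'_iff prod.collapse)+
  then have "0 \<le> d_cut (fst a') (fst x')"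
    by (rule dist_T_nonneg[OF finite_V connected lam_cut_nonneg])
  then show ?thesis
    using d_cut_le_d'[OF assms] by simp
qed

lemma V'_eq_Union_U': "V' E = (\<Union>i<k. U' E (U i))"
proof (intro equalityI subsetI)
  fix p assume p: "p \<in> V' E"
  obtain u v where "p = (u, v)"
    by (cases p)
  moreover have "u \<in> V" "{u, v} \<in> E"
    using p V'_iff unfolding \<open>p = (u, v)\<close> V'_def by auto
  ultimately show "p \<in> (\<Union>i<k. U' E (U i))"
    using cover unfolding U'_def by auto
qed (auto simp: U'_def V'_def)

lemma ggiv_yes_split_if_ggiv_yes:
  assumes S_sub: "\<forall>i<k. S i \<subseteq> V" and yes: "ggiv_yes V E lam k U S"
  shows "ggiv_yes (V' E) (E' V E ord) (lam' E lam k U \<delta> \<delta>') k (\<lambda>i. U' E (U i)) (\<lambda>i. U' E (S i))"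
proof -
  obtain s where sS: "\<And>i. i < k \<Longrightarrow> s i \<in> S i"
    and cell: "\<And>i. i < k \<Longrightarrow> U i = cell V E lam (s i) (s ` {..<k})"
    using yes unfolding ggiv_yes_def by blast
  have sV: "s i \<in> V" if "i < k" for i
    using sS S_sub that by blast
  define s' where "s' i = (s i, hd (ord (s i)))" for i
  have s'V: "s' i \<in> V' E" if "i < k" for i
    using ord_nonempty[OF sV[OF that]] sV[OF that] unfolding s'_def by (simp add: V'_iff)
  have closer: "d (s m) x < d (s j) x" if "m < k" "j < k" "j \<noteq> m" "x \<in> U m" for m j x
  proof -
    have "x \<notin> U j"
      using disj that by blast
    then obtain l where "l < k" "d (s l) x < d (s j) x"
      using cell[OF \<open>j < k\<close>] cell[OF \<open>m < k\<close>] \<open>x \<in> U m\<close> by (auto simp: cell_image)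
    moreover have "d (s m) x \<le> d (s l) x"
      using cell[OF \<open>m < k\<close>] \<open>x \<in> U m\<close> \<open>l < k\<close> by (auto simp: cell_image)
    ultimately show ?thesis
      by linarith
  qed
  have strict: "d' (s' m) x' < d' (s' j) x'"
    if m: "m < k" and x'U: "x' \<in> U' E (U m)" and j: "j < k" "j \<noteq> m" for m j x'
  proof -
    obtain x y where x': "x' = (x, y)" "x \<in> U m" "{x, y} \<in> E"
      using x'U unfolding U'_def by blast
    then have x'V: "x' \<in> V' E"
      by (simp add: V'_def)
    then have x: "x \<in> V" "y \<in> set (ord x)"
      using x'(1) by (simp_all add: V'_iff)
    have "d' (s' m) x' \<le> d (s m) x + \<delta> / 2"
      using d'_le_d[OF sV[OF m] x(1) _ x(2)] s'V[OF m] x'(1) unfolding s'_def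
      by (simp add: V'_iff)
    moreover have "d (s j) x - (real (card V) - 1) * \<delta> \<le> d' (s' j) x'"
      using d_cut_ge[OF sV[OF j(1)] x(1)] d_cut_le_d'[OF s'V[OF j(1)] x'V] x'(1)
      unfolding s'_def by simp
    moreover have "res' V E lam \<le> d (s j) x - d (s m) x"
      using res'_le_dist_diff[OF finite_V sV[OF m] sV[OF j(1)] x(1)] closer[OF m j x'(2)]
      by simp
    moreover have "(real (card V) - 1) * \<delta> + \<delta> / 2 \<le> 6 * real (card V) * \<delta>"
      using \<delta>_pos by (simp add: algebra_simps)
    ultimately show ?thesis
      using six_n_\<delta>_less_res' by linarith
  qed
  show ?thesis
    unfolding ggiv_yes_def
  proof (intro exI[of _ s'] allI impI conjI)
    fix i assume "i < k"
    show "s' i \<in> U' E (S i)"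
      using s'V[OF \<open>i < k\<close>] sS[OF \<open>i < k\<close>] unfolding s'_def U'_def V'_def by simp
    show "U' E (U i) = cell (V' E) (E' V E ord) (lam' E lam k U \<delta> \<delta>') (s' i) (s' ` {..<k})"
      using cover_piece_eq_minimizers[where f = "\<lambda>m. d' (s' m)", OF V'_eq_Union_U' strict \<open>i < k\<close>]
      by (simp add: cell_image)
  qed
qed

lemma ggiv_yes_if_ggiv_yes_split:
  assumes yes': "ggiv_yes (V' E) (E' V E ord) (lam' E lam k U \<delta> \<delta>') k (\<lambda>i. U' E (U i)) (\<lambda>i. U' E (S i))"
  shows "ggiv_yes V E lam k U S"
proof -
  obtain s' where s'S: "\<And>i. i < k \<Longrightarrow> s' i \<in> U' E (S i)"
    and cell: "\<And>i. i < k \<Longrightarrow> U' E (U i) = cell (V' E) (E' V E ord) (lam' E lam k U \<delta> \<delta>') (s' i) (s' ` {..<k})"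
    using yes' unfolding ggiv_yes_def by blast
  define s where "s i = fst (s' i)" for i
  have s'V: "s' i \<in> V' E" if "i < k" for i
    using s'S[OF that] unfolding U'_def V'_def by auto
  have sU: "s i \<in> U i" if "i < k" for i
  proof -
    have "d' (s' i) (s' i) \<le> d' (s' j) (s' i)" if "j < k" for j
      using d'_self[OF s'V] d'_nonneg[OF s'V s'V] \<open>i < k\<close> that by simp
    then have "s' i \<in> U' E (U i)"
      using cell[OF that] s'V[OF that] by (simp add: cell_image)
    then show ?thesis
      unfolding s_def U'_def by auto
  qed
  have strict: "d (s m) x < d (s j) x"
    if m: "m < k" and x: "x \<in> U m" and j: "j < k" "j \<noteq> m" for m j x
  proof -
    have xV: "x \<in> V"
      using m x cover by blast
    define x' where "x' = (x, hd (ord x))"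
    have x'V: "x' \<in> V' E"
      using xV ord_nonempty[OF xV] unfolding x'_def by (simp add: V'_iff)
    have "x \<notin> U j"
      using disj m x j by blast
    have "snd (s' j) \<in> set (ord (s j))"
      using s'V[OF j(1)] V'_iff[of "fst (s' j)" "snd (s' j)"] unfolding s_def by simp
    have "x' \<in> U' E (U m)"
      using x x'V unfolding x'_def U'_def V'_def by simp
    then have "d' (s' m) x' \<le> d' (s' j) x'"
      using cell[OF m] j(1) by (simp add: cell_image)
    moreover have "d (s m) x \<le> d' (s' m) x'"
      using d_le_d_cut_in_cell[OF m sU[OF m] x] d_cut_le_d'[OF s'V[OF m] x'V]
      unfolding s_def x'_def by simp
    moreover have "d' (s' j) x' \<le> d (s j) x - \<delta> / 2"
      using d'_le_d_leaving[OF j(1) sU[OF j(1)] xV \<open>x \<notin> U j\<close> \<open>snd (s' j) \<in> set (ord (s j))\<close>]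
        ord_nonempty[OF xV]
      unfolding s_def x'_def by simp
    ultimately show ?thesis
      using \<delta>_pos by linarith
  qed
  show ?thesis
    unfolding ggiv_yes_def
  proof (intro exI[of _ s] allI impI conjI)
    fix i assume "i < k"
    show "s i \<in> S i"
      using s'S[OF \<open>i < k\<close>] unfolding s_def U'_def by auto
    show "U i = cell V E lam (s i) (s ` {..<k})"
      using cover_piece_eq_minimizers[where f = "\<lambda>m. d (s m)", OF cover[symmetric] strict \<open>i < k\<close>]
      by (simp add: cell_image)
  qed
qed

end

theorem lemma20:
  fixes V :: "'a set" and E :: "'a set set" and lam :: "'a set \<Rightarrow> real"
    and k :: nat and U S :: "nat \<Rightarrow> 'a set" and \<delta> \<delta>' :: real
    and ord :: "'a \<Rightarrow> 'a list"
  assumes tree: "is_tree V E"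
    and pos: "\<forall>e\<in>E. lam e > 0"
    and U_sub: "\<forall>i<k. U i \<subseteq> V" and S_sub: "\<forall>i<k. S i \<subseteq> V"
    and cover: "(\<Union>i<k. U i) = V"
    and disj: "\<forall>i<k. \<forall>j<k. i \<noteq> j \<longrightarrow> U i \<inter> U j = {}"
    and conn: "\<forall>i<k. induces_subtree V E (U i)"
    and n2: "2 \<le> card V"
    and \<delta>_pos: "0 < \<delta>"
    and \<delta>_small: "\<delta> < res' V E lam / (6 * real (card V))"
    and \<delta>'_def: "\<delta>' = \<delta> / (4 * real (card V))"
    and ord: "valid_orders V E ord"
  shows "ggiv_yes V E lam k U S \<longleftrightarrow>
    ggiv_yes (V' E) (E' V E ord) (lam' E lam k U \<delta> \<delta>') k (\<lambda>i. U' E (U i)) (\<lambda>i. U' E (S i))"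
proof -
  interpret inverse_voronoi_reduction V E ord lam k U \<delta> \<delta>'
  proof unfold_locales
    show "graph_edges_ok V E"
      using tree unfolding is_tree_def by blast
    show "0 \<le> \<delta>'"
      using \<delta>'_def \<delta>_pos by simp
  qed (use tree pos cover disj conn n2 \<delta>_pos \<delta>_small \<delta>'_def ord in auto)
  show ?thesis
    using ggiv_yes_split_if_ggiv_yes[OF S_sub] ggiv_yes_if_ggiv_yes_split by blast
qed

end
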